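(* Let $n,k\in\mathbb{N}$, $\alpha\in(0,\infty)$, and let $\vec{d}=(d_1,\dots,d_n)$ be given. (i) Let $Z_{n,1},\dots,Z_{n,n}$ be IID with $P(Z_{n,j}=d)=\frac{\alpha^{\overline{d}}}{d!}\left(\frac{\alpha}{\alpha+k}\right)^{\alpha}\left(\frac{k}{\alpha+k}\right)^{d}$ for $d=0,1,2,\dots$, and $\vec{Z}_n=(Z_{n,1},\dots,Z_{n,n})$. Then $P(\vec{D}_n^{\alpha}=\vec{d})=P(\vec{Z}_n=\vec{d}\mid Z_{n,1}+\cdots+Z_{n,n}=kn)$. (ii) Let $Y_{n,1},\dots,Y_{n,n}$ be IID Poisson random variables with mean $k$ and $\vec{Y}_n=(Y_{n,1},\dots,Y_{n,n})$. Then $P(\vec{D}_n^{\infty}=\vec{d})=P(\vec{Y}_n=\vec{d}\mid Y_{n,1}+\cdots+Y_{n,n}=kn)$.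
   Context: A $k$-out map on $[n]$ is a map $M:[n]\to[n]^k$; the in-degree of vertex $j$ is the total number of coordinates, over all vertices and all $k$ labels, of the images equal to $j$. For $\alpha\in(0,\infty)$, the random $k$-out map $M_{n,k}^{\alpha}$ has law $P(M_{n,k}^{\alpha}=M)=\prod_{j=1}^n \alpha^{\overline{d_j}}/(\alpha n)^{\overline{kn}}$, where $(d_1,\dots,d_n)$ is the in-degree sequence of $M$ and $x^{\overline{y}}=x(x+1)\cdots(x+y-1)$ (it arises from a preferential attachment process where each vertex has initial weight $\alpha$ and each chosen image gains weight $1$). $M_{n,k}^{\infty}$ is the uniformly random $k$-out map on $[n]$. $\vec{D}_n^{\alpha}=(D_{n,1}^{\alpha},\dots,D_{n,n}^{\alpha})$ and $\vec{D}_n^{\infty}$ denote the in-degree sequences of $M_{n,k}^{\alpha}$ and $M_{n,k}^{\infty}$ respectively. *)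

theory Defs
  imports "HOL-Analysis.Analysis" "HOL-Library.FuncSet"
begin

text \<open>Vertices are indexed by 0..n-1, labels by 0..k-1.  A k-out map on [n] is
  a function assigning to each (vertex, label) pair an image vertex; extensional
  outside the domain so that the set of k-out maps is finite and in bijection
  with [n] -> [n]^k.\<close>

definition kout_maps :: "nat \<Rightarrow> nat \<Rightarrow> (nat \<times> nat \<Rightarrow> nat) set" where
  "kout_maps n k = ({..<n} \<times> {..<k}) \<rightarrow>\<^sub>E {..<n}"

definition indeg :: "nat \<Rightarrow> nat \<Rightarrow> (nat \<times> nat \<Rightarrow> nat) \<Rightarrow> nat \<Rightarrow> nat" where
  "indeg n k M j = card {p \<in> {..<n} \<times> {..<k}. M p = j}"

definition kout_prob :: "real \<Rightarrow> nat \<Rightarrow> nat \<Rightarrow> (nat \<times> nat \<Rightarrow> nat) \<Rightarrow> real" where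
  "kout_prob \<alpha> n k M =
     (\<Prod>j<n. pochhammer \<alpha> (indeg n k M j)) / pochhammer (\<alpha> * real n) (k * n)"

text \<open>P(D_n^alpha = d), where d is read on indices 0..n-1.\<close>
definition prob_indeg_alpha :: "real \<Rightarrow> nat \<Rightarrow> nat \<Rightarrow> (nat \<Rightarrow> nat) \<Rightarrow> real" where
  "prob_indeg_alpha \<alpha> n k d =
     (\<Sum>M \<in> {M \<in> kout_maps n k. \<forall>j<n. indeg n k M j = d j}. kout_prob \<alpha> n k M)"

definition prob_indeg_unif :: "nat \<Rightarrow> nat \<Rightarrow> (nat \<Rightarrow> nat) \<Rightarrow> real" where
  "prob_indeg_unif n k d =
     real (card {M \<in> kout_maps n k. \<forall>j<n. indeg n k M j = d j}) / real (card (kout_maps n k))"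

text \<open>The joint pmf of an IID vector is the product of the marginals; the event
  {sum = s} is the finite union over nonnegative integer vectors with sum s
  (each entry then lies in 0..s).\<close>
definition iid_cond_prob :: "(nat \<Rightarrow> real) \<Rightarrow> nat \<Rightarrow> nat \<Rightarrow> (nat \<Rightarrow> nat) \<Rightarrow> real" where
  "iid_cond_prob p n s d =
     (if (\<Sum>j<n. d j) = s then (\<Prod>j<n. p (d j)) else 0) /
     (\<Sum>e \<in> {e \<in> {..<n} \<rightarrow>\<^sub>E {..s}. (\<Sum>j<n. e j) = s}. \<Prod>j<n. p (e j))"

definition Z_pmf :: "real \<Rightarrow> nat \<Rightarrow> nat \<Rightarrow> real" where
  "Z_pmf \<alpha> k d = pochhammer \<alpha> d / fact d * (\<alpha> / (\<alpha> + real k)) powr \<alpha>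
                   * (real k / (\<alpha> + real k)) ^ d"

text \<open>Poisson law with mean k (valid also for k = 0: point mass at 0).\<close>
definition Y_pmf :: "nat \<Rightarrow> nat \<Rightarrow> real" where
  "Y_pmf k d = real k ^ d / fact d * exp (- real k)"

end

theory Submission
  imports Defs
begin

text \<open>Under both laws of the random \<open>k\<close>-out map, all maps with in-degree sequence \<open>d\<close> have the
  same probability, and there are \<open>(kn)! / \<Prod>\<^sub>j d\<^sub>j!\<close> of them (a multinomial coefficient), so
  \<open>P(D = d)\<close> is proportional to \<open>\<Prod>\<^sub>j pochhammer \<alpha> d\<^sub>j / d\<^sub>j!\<close>, resp. to \<open>\<Prod>\<^sub>j 1 / d\<^sub>j!\<close>.
  The laws of \<open>Z\<close> and \<open>Y\<close> have the form \<open>c q\<^sup>m p a m / m!\<close> for the binomial-type sequences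
  \<open>p = pochhammer\<close> resp. \<open>p a m = a\<^sup>m\<close>. Conditioning on the sum cancels the factors \<open>c q\<^sup>m\<close>, and the
  binomial identity for \<open>p\<close> evaluates the normalising sum over all compositions of \<open>s\<close> into \<open>n\<close>
  parts as \<open>p (n a) s / s!\<close>, which is exactly the normalisation of the in-degree law.\<close>

definition maps_with_fibre_sizes :: "'a set \<Rightarrow> nat \<Rightarrow> (nat \<Rightarrow> nat) \<Rightarrow> ('a \<Rightarrow> nat) set" where
  "maps_with_fibre_sizes A n d = {M \<in> A \<rightarrow>\<^sub>E {..<n}. \<forall>j<n. card {x \<in> A. M x = j} = d j}"

lemma finite_maps_with_fibre_sizes:
  "finite A \<Longrightarrow> finite (maps_with_fibre_sizes A n d)"
  unfolding maps_with_fibre_sizes_def by (rule finite_subset[OF _ finite_PiE[of A "\<lambda>_. {..<n}"]]) auto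

lemma sum_card_fibres:
  fixes n :: nat
  assumes "finite A" "M \<in> A \<rightarrow>\<^sub>E {..<n}"
  shows "(\<Sum>j<n. card {x \<in> A. M x = j}) = card A"
proof -
  have "(\<Sum>j<n. \<Sum>x \<in> {x \<in> A. M x = j}. 1::nat) = (\<Sum>x \<in> A. 1)"
    by (rule sum.group) (use assms in auto)
  then show ?thesis by simp
qed

lemma maps_with_fibre_sizes_empty:
  assumes "finite A" and "(\<Sum>j<n. d j) \<noteq> card A"
  shows "maps_with_fibre_sizes A n d = {}"
proof -
  have "(\<Sum>j<n. d j) = card A" if M: "M \<in> maps_with_fibre_sizes A n d" for M
  proof -
    have "(\<Sum>j<n. d j) = (\<Sum>j<n. card {x \<in> A. M x = j})"
      using M by (intro sum.cong) (auto simp: maps_with_fibre_sizes_def)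
    also have "\<dots> = card A"
      using M assms(1) by (intro sum_card_fibres) (auto simp: maps_with_fibre_sizes_def)
    finally show ?thesis .
  qed
  then show ?thesis
    using assms(2) by blast
qed

lemma bij_betw_split_last_fibre:
  "bij_betw (\<lambda>M. ({x \<in> A. M x = n}, restrict M (A - {x \<in> A. M x = n})))
     (maps_with_fibre_sizes A (Suc n) d)
     (SIGMA S : {S. S \<subseteq> A \<and> card S = d n}. maps_with_fibre_sizes (A - S) n d)"
    (is "bij_betw ?split ?F ?G")
proof (rule bij_betw_byWitness[where f' = "\<lambda>(S, M') x. if x \<in> S then n else M' x"])
  let ?join = "\<lambda>(S, M') x. if x \<in> S then n else M' x"
  show "\<forall>M \<in> ?F. ?join (?split M) = M"
    by (auto simp: maps_with_fibre_sizes_def PiE_def extensional_def fun_eq_iff)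
  show "\<forall>b \<in> ?G. ?split (?join b) = b"
  proof
    fix b assume "b \<in> ?G"
    then obtain S M' where b: "b = (S, M')" and S: "S \<subseteq> A" and M': "M' \<in> (A - S) \<rightarrow>\<^sub>E {..<n}"
      by (auto simp: maps_with_fibre_sizes_def)
    then have "{x \<in> A. ?join b x = n} = S"
      by (auto simp: PiE_def Pi_def)
    then show "?split (?join b) = b"
      using S M' by (auto simp: b PiE_def extensional_def fun_eq_iff)
  qed
  show "?split ` ?F \<subseteq> ?G"
  proof (rule image_subsetI)
    fix M assume M: "M \<in> ?F"
    have "{x \<in> A - {x \<in> A. M x = n}. restrict M (A - {x \<in> A. M x = n}) x = j} = {x \<in> A. M x = j}"
      if "j < n" for j using that by auto
    with M show "?split M \<in> ?G"
      by (auto simp: maps_with_fibre_sizes_def PiE_def Pi_def less_Suc_eq)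
  qed
  show "?join ` ?G \<subseteq> ?F"
  proof (rule image_subsetI)
    fix b assume "b \<in> ?G"
    then obtain S M' where b: "b = (S, M')" and S: "S \<subseteq> A" "card S = d n"
      and M': "M' \<in> maps_with_fibre_sizes (A - S) n d"
      by auto
    have "{x \<in> A. ?join b x = j} = (if j = n then S else {x \<in> A - S. M' x = j})"
      if "j < Suc n" for j using that S M' by (auto simp: b maps_with_fibre_sizes_def PiE_def Pi_def)
    with S M' show "?join b \<in> ?F"
      by (auto simp: b maps_with_fibre_sizes_def PiE_def Pi_def extensional_def less_Suc_eq)
  qed
qed

lemma card_maps_with_fibre_sizes:
  assumes "finite A"
  shows "real (card (maps_with_fibre_sizes A n d)) =
           (if (\<Sum>j<n. d j) = card A then fact (card A) / (\<Prod>j<n. fact (d j)) else 0)"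
  using assms
proof (induction n arbitrary: A)
  case 0
  then show ?case by (auto simp: maps_with_fibre_sizes_def)
next
  case (Suc n)
  show ?case
  proof (cases "(\<Sum>j<Suc n. d j) = card A")
    case False
    then show ?thesis using maps_with_fibre_sizes_empty[OF Suc.prems] by simp
  next
    case sum: True
    define SS where "SS = {S. S \<subseteq> A \<and> card S = d n}"
    have card_rest: "card (A - S) = card A - d n" and sum_rest: "(\<Sum>j<n. d j) = card (A - S)"
      if "S \<in> SS" for S
      using that sum Suc.prems by (auto simp: SS_def card_Diff_subset finite_subset)
    have "card (maps_with_fibre_sizes A (Suc n) d) = card (SIGMA S : SS. maps_with_fibre_sizes (A - S) n d)"
      using bij_betw_same_card[OF bij_betw_split_last_fibre] by (simp add: SS_def)
    also have "\<dots> = (\<Sum>S \<in> SS. card (maps_with_fibre_sizes (A - S) n d))"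
      using Suc.prems by (intro card_SigmaI) (auto simp: SS_def finite_maps_with_fibre_sizes)
    finally have "real (card (maps_with_fibre_sizes A (Suc n) d))
        = (\<Sum>S \<in> SS. real (card (maps_with_fibre_sizes (A - S) n d)))"
      by simp
    also have "\<dots> = (\<Sum>S \<in> SS. fact (card A - d n) / (\<Prod>j<n. fact (d j)))"
      using Suc.IH Suc.prems card_rest sum_rest by (simp add: finite_subset)
    also have "\<dots> = real (card A choose d n) * fact (card A - d n) / (\<Prod>j<n. fact (d j))"
      by (simp add: SS_def n_subsets Suc.prems)
    also have "\<dots> = fact (card A) / (\<Prod>j<Suc n. fact (d j))"
      using sum by (simp add: binomial_fact field_simps)
    finally show ?thesis using sum by simp
  qed
qed

text \<open>The bound \<open>B\<close> only serves to make the index set finite.\<close>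

lemma sum_prod_compositions_convolution:
  fixes g :: "'a::semiring_1 \<Rightarrow> nat \<Rightarrow> 'b::comm_semiring_1"
  assumes conv: "\<And>b m. g (a + b) m = (\<Sum>i\<le>m. g a i * g b (m - i))"
    and unit: "\<And>m. g 0 m = (if m = 0 then 1 else 0)"
    and "m \<le> B"
  shows "(\<Sum>e \<in> {e \<in> {..<n} \<rightarrow>\<^sub>E {..B}. (\<Sum>j<n. e j) = m}. \<Prod>j<n. g a (e j)) = g (of_nat n * a) m"
  using \<open>m \<le> B\<close>
proof (induction n arbitrary: m)
  case 0
  have "{e \<in> {..<0::nat} \<rightarrow>\<^sub>E {..B}. (\<Sum>j<0. e j) = m} = (if m = 0 then {\<lambda>_. undefined} else {})"
    by auto
  then show ?case by (simp add: unit)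
next
  case (Suc n)
  let ?E = "\<lambda>m. {e \<in> {..<n} \<rightarrow>\<^sub>E {..B}. (\<Sum>j<n. e j) = m}"
  have upd_sum: "(\<Sum>j<n. (e(n := x)) j) = (\<Sum>j<n. e j)"
    and upd_prod: "(\<Prod>j<n. g a ((e(n := x)) j)) = (\<Prod>j<n. g a (e j))" for e :: "nat \<Rightarrow> nat" and x
    by (auto intro: sum.cong prod.cong)
  have "(\<Sum>e \<in> {e \<in> {..<Suc n} \<rightarrow>\<^sub>E {..B}. (\<Sum>j<Suc n. e j) = m}. \<Prod>j<Suc n. g a (e j))
      = (\<Sum>(x, e) \<in> (SIGMA x : {..m}. ?E (m - x)). (\<Prod>j<n. g a (e j)) * g a x)"
    by (rule sum.reindex_bij_witness[where j = "\<lambda>e. (e n, e(n := undefined))" and i = "\<lambda>(x, e). e(n := x)"])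
      (use Suc.prems in \<open>auto simp: PiE_def Pi_def extensional_def upd_sum upd_prod less_Suc_eq\<close>)
  also have "\<dots> = (\<Sum>x\<le>m. \<Sum>e \<in> ?E (m - x). (\<Prod>j<n. g a (e j)) * g a x)"
    by (rule sum.Sigma[symmetric]) (auto intro: finite_subset[OF _ finite_PiE[of "{..<n}" "\<lambda>_. {..B}"]])
  also have "\<dots> = (\<Sum>x\<le>m. (\<Sum>e \<in> ?E (m - x). \<Prod>j<n. g a (e j)) * g a x)"
    by (simp only: sum_distrib_right)
  also have "\<dots> = (\<Sum>x\<le>m. g a x * g (of_nat n * a) (m - x))"
    using Suc by (simp add: mult.commute)
  also have "\<dots> = g (of_nat (Suc n) * a) m"
    by (simp add: conv algebra_simps)
  finally show ?case .
qed

locale binomial_type =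
  fixes p :: "real \<Rightarrow> nat \<Rightarrow> real"
  assumes p_add: "p (a + b) m = (\<Sum>i\<le>m. of_nat (m choose i) * p a i * p b (m - i))"
    and p_zero: "p 0 m = (if m = 0 then 1 else 0)"
begin

lemma p_add_div_fact:
  "p (a + b) m / fact m = (\<Sum>i\<le>m. p a i / fact i * (p b (m - i) / fact (m - i)))"
  unfolding p_add sum_divide_distrib by (rule sum.cong[OF refl]) (simp add: binomial_fact field_simps)

lemma sum_prod_compositions:
  assumes "m \<le> B"
  shows "(\<Sum>e \<in> {e \<in> {..<n} \<rightarrow>\<^sub>E {..B}. (\<Sum>j<n. e j) = m}. \<Prod>j<n. p a (e j) / fact (e j))
           = p (real n * a) m / fact m"
  using sum_prod_compositions_convolution[where g = "\<lambda>a i. p a i / fact i"] assms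
  by (simp add: p_add_div_fact p_zero)

text \<open>Conditioning on the sum cancels the exponential tilt \<open>c q\<^sup>m\<close>.\<close>

lemma iid_cond_prob_tilted:
  assumes pmf: "\<And>m. f m = c * q ^ m * (p a m / fact m)" and "c \<noteq> 0" "q ^ s \<noteq> 0"
  shows "iid_cond_prob f n s d =
           (if (\<Sum>j<n. d j) = s then (\<Prod>j<n. p a (d j) / fact (d j)) / (p (real n * a) s / fact s) else 0)"
proof -
  have prod_f: "(\<Prod>j<n. f (e j)) = c ^ n * q ^ (\<Sum>j<n. e j) * (\<Prod>j<n. p a (e j) / fact (e j))" for e
    unfolding pmf prod.distrib by (simp add: power_sum)
  have den: "(\<Sum>e \<in> {e \<in> {..<n} \<rightarrow>\<^sub>E {..s}. (\<Sum>j<n. e j) = s}. \<Prod>j<n. f (e j))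
      = c ^ n * q ^ s * (p (real n * a) s / fact s)"
  proof -
    have "(\<Sum>e \<in> {e \<in> {..<n} \<rightarrow>\<^sub>E {..s}. (\<Sum>j<n. e j) = s}. \<Prod>j<n. f (e j))
        = (\<Sum>e \<in> {e \<in> {..<n} \<rightarrow>\<^sub>E {..s}. (\<Sum>j<n. e j) = s}. c ^ n * q ^ s * (\<Prod>j<n. p a (e j) / fact (e j)))"
      by (rule sum.cong) (simp_all add: prod_f)
    also have "\<dots> = c ^ n * q ^ s * (p (real n * a) s / fact s)"
      by (simp only: sum_distrib_left[symmetric] sum_prod_compositions[OF order_refl])
    finally show ?thesis .
  qed
  show ?thesis
  proof (cases "(\<Sum>j<n. d j) = s")
    case True
    then have "iid_cond_prob f n s d = (c ^ n * q ^ s * (\<Prod>j<n. p a (d j) / fact (d j)))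
                                         / (c ^ n * q ^ s * (p (real n * a) s / fact s))"
      unfolding iid_cond_prob_def den using True by (simp add: prod_f)
    also have "\<dots> = (\<Prod>j<n. p a (d j) / fact (d j)) / (p (real n * a) s / fact s)"
      using assms(2,3) by (intro nonzero_mult_divide_mult_cancel_left) simp
    finally show ?thesis
      using True by simp
  next
    case False
    then show ?thesis by (simp add: iid_cond_prob_def)
  qed
qed

end

interpretation pochhammer: binomial_type pochhammer
  by unfold_locales (simp_all add: pochhammer_binomial_sum pochhammer_0_left)

interpretation power: binomial_type "\<lambda>a m. a ^ m"
  by unfold_locales (simp_all add: binomial_ring)

lemma card_kout_maps_with_indeg:
  "real (card {M \<in> kout_maps n k. \<forall>j<n. indeg n k M j = d j}) =
     (if (\<Sum>j<n. d j) = k * n then fact (k * n) / (\<Prod>j<n. fact (d j)) else 0)"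
proof -
  have "{M \<in> kout_maps n k. \<forall>j<n. indeg n k M j = d j} = maps_with_fibre_sizes ({..<n} \<times> {..<k}) n d"
    by (simp add: kout_maps_def indeg_def maps_with_fibre_sizes_def)
  then show ?thesis
    by (simp add: card_maps_with_fibre_sizes mult.commute)
qed

lemma prob_indeg_alpha_eq_cond_Z:
  assumes "\<alpha> > 0"
  shows "prob_indeg_alpha \<alpha> n k d = iid_cond_prob (Z_pmf \<alpha> k) n (k * n) d"
proof -
  have "(\<alpha> / (\<alpha> + real k)) powr \<alpha> \<noteq> 0" "(real k / (\<alpha> + real k)) ^ (k * n) \<noteq> 0"
    using assms by (auto simp: power_0_left)
  then have "iid_cond_prob (Z_pmf \<alpha> k) n (k * n) d =
      (if (\<Sum>j<n. d j) = k * n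
       then (\<Prod>j<n. pochhammer \<alpha> (d j) / fact (d j)) / (pochhammer (real n * \<alpha>) (k * n) / fact (k * n))
       else 0)"
    by (intro pochhammer.iid_cond_prob_tilted[where c = "(\<alpha> / (\<alpha> + real k)) powr \<alpha>"
          and q = "real k / (\<alpha> + real k)"]) (simp_all add: Z_pmf_def)
  moreover have "prob_indeg_alpha \<alpha> n k d =
      (\<Sum>M \<in> {M \<in> kout_maps n k. \<forall>j<n. indeg n k M j = d j}.
         (\<Prod>j<n. pochhammer \<alpha> (d j)) / pochhammer (\<alpha> * real n) (k * n))"
    unfolding prob_indeg_alpha_def kout_prob_def by (rule sum.cong) auto
  ultimately show ?thesis
    by (simp add: card_kout_maps_with_indeg prod_dividef mult.commute)
qed

lemma prob_indeg_unif_eq_cond_Poisson: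
  "prob_indeg_unif n k d = iid_cond_prob (Y_pmf k) n (k * n) d"
proof -
  have "iid_cond_prob (Y_pmf k) n (k * n) d =
      (if (\<Sum>j<n. d j) = k * n
       then (\<Prod>j<n. real k ^ d j / fact (d j)) / ((real n * real k) ^ (k * n) / fact (k * n))
       else 0)"
    by (intro power.iid_cond_prob_tilted[where c = "exp (- real k)" and q = 1]) (simp_all add: Y_pmf_def)
  also have "\<dots> = (if (\<Sum>j<n. d j) = k * n
       then fact (k * n) / (\<Prod>j<n. fact (d j)) / real n ^ (k * n) else 0)"
    by (cases "k = 0") (auto simp: prod_dividef power_sum[symmetric] power_mult_distrib)
  moreover have "card (kout_maps n k) = n ^ (k * n)"
    by (simp add: kout_maps_def card_PiE mult.commute)
  ultimately show ?thesis
    by (simp add: prob_indeg_unif_def card_kout_maps_with_indeg)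
qed

theorem lemma1:
  fixes n k :: nat and \<alpha> :: real and d :: "nat \<Rightarrow> nat"
  assumes "\<alpha> > 0"
  shows "prob_indeg_alpha \<alpha> n k d = iid_cond_prob (Z_pmf \<alpha> k) n (k * n) d
         \<and> prob_indeg_unif n k d = iid_cond_prob (Y_pmf k) n (k * n) d"
  using prob_indeg_alpha_eq_cond_Z[OF assms] prob_indeg_unif_eq_cond_Poisson by blast

end
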